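(* Let $n\ge3$ be an integer, $k=n$, and let $X$ be the discrete-time Markov chain on $\mathbb{N}^{n-1}$ described in the context. Then $X$ is unstable (not ergodic).
   Context: $\mathbb{N}=\{0,1,2,\dots\}$. $\mathbf{0}$, $\mathbf{1}$ are the all-zero and all-one vectors of dimension $n-1$, $\mathbf{e}_l$ the $l$-th unit vector. For $j=0,\dots,n-1$, $R_j$ is the set of $\mathbf{x}\in\mathbb{N}^{n-1}$ with exactly $j$ zero entries. $X$ is the Markov chain on $\mathbb{N}^{n-1}$ with nonzero transition probabilities: from $\mathbf{x}\in R_0$, to $\mathbf{x}-\mathbf{1}$ w.p. $\frac{k-(n-1)}{k}$ and to $\mathbf{x}+\mathbf{e}_l$ w.p. $\frac1k$ ($l=1,\dots,n-1$); from $\mathbf{x}\in R_j$, $1\le j\le n-2$, to $\mathbf{x}+\mathbf{e}_l$ w.p. $\frac{k-(n-1-j)}{kj}$ if $x_l=0$ and w.p. $\frac1k$ if $x_l\ge1$; from $\mathbf{0}$ to $\mathbf{e}_l$ w.p. $\frac1{n-1}$. *)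

theory Defs
  imports "HOL-Analysis.Analysis"
begin

text \<open>States: vectors in N^(n-1), represented as functions nat => nat whose entries
  at indices l >= n-1 are zero (coordinates are indexed 0,...,n-2).\<close>

definition states :: "nat \<Rightarrow> (nat \<Rightarrow> nat) set" where
  "states n = {x. \<forall>i\<ge>n - 1. x i = 0}"

text \<open>Number of zero entries of x among the n-1 coordinates (x is in R_j iff this is j).\<close>
definition num_zeros :: "nat \<Rightarrow> (nat \<Rightarrow> nat) \<Rightarrow> nat" where
  "num_zeros n x = card {l. l < n - 1 \<and> x l = 0}"

definition dec_all :: "nat \<Rightarrow> (nat \<Rightarrow> nat) \<Rightarrow> (nat \<Rightarrow> nat)" where
  "dec_all n x = (\<lambda>i. if i < n - 1 then x i - 1 else 0)"

definition inc :: "(nat \<Rightarrow> nat) \<Rightarrow> nat \<Rightarrow> (nat \<Rightarrow> nat)" where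
  "inc x l = x(l := Suc (x l))"

definition inc_prob :: "nat \<Rightarrow> nat \<Rightarrow> (nat \<Rightarrow> nat) \<Rightarrow> nat \<Rightarrow> real" where
  "inc_prob n k x l =
     (let m = n - 1; j = num_zeros n x in
      if j = 0 then 1 / real k
      else if j = m then 1 / real m
      else if x l = 0 then (real k - (real m - real j)) / (real k * real j)
      else 1 / real k)"

definition trans_prob :: "nat \<Rightarrow> nat \<Rightarrow> (nat \<Rightarrow> nat) \<Rightarrow> (nat \<Rightarrow> nat) \<Rightarrow> real" where
  "trans_prob n k x y =
     (if num_zeros n x = 0 \<and> y = dec_all n x then (real k - real (n - 1)) / real k else 0)
     + (\<Sum>l<n - 1. if y = inc x l then inc_prob n k x l else 0)"

text \<open>first_hit P z t w: probability, starting from w, that the first visit to z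
  (at times >= 0) happens at time t.\<close>
fun first_hit :: "(('s \<Rightarrow> 's \<Rightarrow> real)) \<Rightarrow> 's \<Rightarrow> nat \<Rightarrow> 's \<Rightarrow> real" where
  "first_hit P z 0 w = (if w = z then 1 else 0)"
| "first_hit P z (Suc t) w =
     (if w = z then 0 else (\<Sum>\<^sub>\<infinity> v. P w v * first_hit P z t v))"

definition return_prob :: "('s \<Rightarrow> 's \<Rightarrow> real) \<Rightarrow> 's \<Rightarrow> nat \<Rightarrow> real" where
  "return_prob P z t = (if t = 0 then 0 else (\<Sum>\<^sub>\<infinity> v. P z v * first_hit P z (t - 1) v))"

definition positive_recurrent :: "('s \<Rightarrow> 's \<Rightarrow> real) \<Rightarrow> 's \<Rightarrow> bool" where
  "positive_recurrent P z \<longleftrightarrow>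
     (\<Sum>t. return_prob P z t) = 1 \<and> summable (\<lambda>t. real t * return_prob P z t)"

end

theory Submission
  imports Defs
begin

(* The coordinate sum S has expected increment 0 from states without zero coordinates and 1 from
   all other states, and it never grows by more than 1 in one step. Start the chain at z and stop
   it when it returns to z. The expected value of S at time T + 1 is nondecreasing in T and
   eventually exceeds S(z) by some c > 0: with positive probability the chain first descends along
   x -> x - 1 to a state with a zero coordinate, without passing z. It is also at most
   S(z) + (S(z) + T + 1) P(tau > T + 1), where tau is the return time; if E tau were finite, then
   T P(tau > T) -> 0, forcing this expectation down to S(z). *)

lemma num_zeros_le: "num_zeros n w \<le> n - 1"
  using card_mono[of "{..<n - 1}" "{l. l < n - 1 \<and> w l = 0}"] by (auto simp: num_zeros_def)

lemma num_zeros_eq_0_iff: "num_zeros n w = 0 \<longleftrightarrow> (\<forall>l<n - 1. w l \<noteq> 0)"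
  by (auto simp: num_zeros_def)

lemma sum_if_zero_coord:
  fixes a b :: real
  shows "(\<Sum>l<n - 1. if w l = 0 then a else b)
           = real (num_zeros n w) * a + (real (n - 1) - real (num_zeros n w)) * b"
proof -
  have "(\<Sum>l<n - 1. if w l = 0 then a else b) = (\<Sum>l<n - 1. b + (if w l = 0 then a - b else 0))"
    by (intro sum.cong) auto
  also have "\<dots> = real (n - 1) * b + (\<Sum>l\<in>{l\<in>{..<n - 1}. w l = 0}. a - b)"
    by (simp add: sum.distrib flip: sum.inter_filter)
  also have "{l\<in>{..<n - 1}. w l = 0} = {l. l < n - 1 \<and> w l = 0}"
    by auto
  finally show ?thesis
    by (simp add: num_zeros_def algebra_simps)
qed

lemma inc_prob_nonneg: "inc_prob n n w l \<ge> 0"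
  by (auto simp: inc_prob_def Let_def)

lemma sum_inc_prob:
  assumes "n \<ge> 2"
  shows "(\<Sum>l<n - 1. inc_prob n n w l) = (if num_zeros n w = 0 then 1 - 1 / real n else 1)"
proof -
  define j where "j = num_zeros n w"
  have "j \<le> n - 1"
    unfolding j_def by (rule num_zeros_le)
  then consider "j = 0" | "j = n - 1" | "0 < j" "j < n - 1"
    by linarith
  then show ?thesis
  proof cases
    case 3
    then have "(\<Sum>l<n - 1. inc_prob n n w l)
        = (\<Sum>l<n - 1. if w l = 0 then (real n - (real (n - 1) - real j)) / (real n * real j)
                        else 1 / real n)"
      unfolding inc_prob_def Let_def j_def[symmetric] by (intro sum.cong) auto
    also have "\<dots> = 1"
      using 3 assms unfolding sum_if_zero_coord j_def[symmetric] by (simp add: of_nat_diff field_simps)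
    finally show ?thesis
      using 3 j_def by simp
  qed (use assms in \<open>auto simp: inc_prob_def Let_def j_def[symmetric] of_nat_diff field_simps\<close>)
qed

definition step_exp :: "nat \<Rightarrow> (nat \<Rightarrow> nat) \<Rightarrow> ((nat \<Rightarrow> nat) \<Rightarrow> real) \<Rightarrow> real" where
  "step_exp n w F =
     (if num_zeros n w = 0 then F (dec_all n w) / real n else 0)
     + (\<Sum>l<n - 1. inc_prob n n w l * F (inc w l))"

lemma infsum_trans_prob:
  assumes "n \<ge> 1"
  shows "(\<Sum>\<^sub>\<infinity>v. trans_prob n n w v * F v) = step_exp n w F"
proof -
  let ?A = "insert (dec_all n w) (inc w ` {..<n - 1})"
  have "(\<Sum>\<^sub>\<infinity>v. trans_prob n n w v * F v) = (\<Sum>v\<in>?A. trans_prob n n w v * F v)"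
    by (intro infsumI has_sum_finite_neutralI) (auto simp: trans_prob_def intro!: sum.neutral)
  also have "\<dots> = (\<Sum>v\<in>?A. (if v = dec_all n w then
        (if num_zeros n w = 0 then F (dec_all n w) / real n else 0) else 0)
      + (\<Sum>l<n - 1. if v = inc w l then inc_prob n n w l * F (inc w l) else 0))"
    using assms by (intro sum.cong refl)
      (auto simp: trans_prob_def of_nat_diff distrib_right sum_distrib_right intro!: sum.cong)
  also have "\<dots> = step_exp n w F"
    unfolding sum.distrib by (subst sum.swap) (simp add: step_exp_def)
  finally show ?thesis .
qed

lemma step_exp_const:
  assumes "n \<ge> 2"
  shows "step_exp n w (\<lambda>_. c) = c"
  using assms unfolding step_exp_def sum_distrib_right[symmetric] sum_inc_prob[OF assms]
  by (simp add: field_simps)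

lemma step_exp_add: "step_exp n w (\<lambda>v. F v + G v) = step_exp n w F + step_exp n w G"
  by (simp add: step_exp_def add_divide_distrib distrib_left sum.distrib)

lemma step_exp_diff: "step_exp n w (\<lambda>v. F v - G v) = step_exp n w F - step_exp n w G"
  by (simp add: step_exp_def diff_divide_distrib right_diff_distrib sum_subtractf)

lemma step_exp_cmult: "step_exp n w (\<lambda>v. a * F v) = a * step_exp n w F"
  by (simp add: step_exp_def distrib_left sum_distrib_left mult.left_commute)

lemma step_exp_sum:
  "finite A \<Longrightarrow> step_exp n w (\<lambda>v. \<Sum>i\<in>A. F i v) = (\<Sum>i\<in>A. step_exp n w (F i))"
proof (induction A rule: finite_induct)
  case empty
  then show ?case
    by (simp add: step_exp_def)
next
  case (insert i A)
  then show ?case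
    by (simp add: step_exp_add)
qed

lemma step_exp_mono:
  assumes "num_zeros n w = 0 \<Longrightarrow> F (dec_all n w) \<le> G (dec_all n w)"
    and "\<And>l. l < n - 1 \<Longrightarrow> F (inc w l) \<le> G (inc w l)"
  shows "step_exp n w F \<le> step_exp n w G"
proof -
  have "(if num_zeros n w = 0 then F (dec_all n w) / real n else 0)
      \<le> (if num_zeros n w = 0 then G (dec_all n w) / real n else 0)"
    using assms(1) by (simp add: divide_right_mono)
  moreover have "(\<Sum>l<n - 1. inc_prob n n w l * F (inc w l))
      \<le> (\<Sum>l<n - 1. inc_prob n n w l * G (inc w l))"
    by (intro sum_mono mult_left_mono assms(2) inc_prob_nonneg) simp
  ultimately show ?thesis
    unfolding step_exp_def by (rule add_mono)
qed

lemma step_exp_nonneg: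
  assumes "num_zeros n w = 0 \<Longrightarrow> F (dec_all n w) \<ge> 0"
    and "\<And>l. l < n - 1 \<Longrightarrow> F (inc w l) \<ge> 0"
  shows "step_exp n w F \<ge> 0"
proof -
  have "step_exp n w (\<lambda>_. 0) \<le> step_exp n w F"
    by (rule step_exp_mono) (use assms in auto)
  moreover have "step_exp n w (\<lambda>_. 0) = 0"
    by (simp add: step_exp_def)
  ultimately show ?thesis
    by simp
qed

lemma step_exp_ge_dec:
  assumes "num_zeros n w = 0" and "\<And>l. l < n - 1 \<Longrightarrow> F (inc w l) \<ge> 0"
  shows "step_exp n w F \<ge> F (dec_all n w) / real n"
proof -
  have "(\<Sum>l<n - 1. inc_prob n n w l * F (inc w l)) \<ge> 0"
    by (intro sum_nonneg mult_nonneg_nonneg inc_prob_nonneg assms(2)) simp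
  then show ?thesis
    using assms(1) by (simp add: step_exp_def)
qed

definition coord_sum :: "nat \<Rightarrow> (nat \<Rightarrow> nat) \<Rightarrow> real" where
  "coord_sum n w = (\<Sum>l<n - 1. real (w l))"

lemma coord_sum_nonneg: "coord_sum n w \<ge> 0"
  by (simp add: coord_sum_def sum_nonneg)

lemma coord_sum_inc:
  assumes "l < n - 1"
  shows "coord_sum n (inc w l) = coord_sum n w + 1"
proof -
  have "coord_sum n (inc w l) = (\<Sum>i<n - 1. real (w i) + (if i = l then 1 else 0))"
    unfolding coord_sum_def inc_def by (intro sum.cong) auto
  then show ?thesis
    using assms by (simp add: coord_sum_def sum.distrib)
qed

lemma coord_sum_dec_all:
  assumes "num_zeros n w = 0"
  shows "coord_sum n (dec_all n w) = coord_sum n w - real (n - 1)"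
proof -
  have "coord_sum n (dec_all n w) = (\<Sum>l<n - 1. real (w l) - 1)"
    unfolding coord_sum_def dec_all_def
    using assms by (intro sum.cong) (auto simp: num_zeros_eq_0_iff of_nat_diff)
  then show ?thesis
    by (simp add: coord_sum_def sum_subtractf)
qed

lemma coord_sum_dec_all_le: "coord_sum n (dec_all n w) \<le> coord_sum n w"
  unfolding coord_sum_def dec_all_def by (intro sum_mono) simp

lemma step_exp_coord_sum:
  assumes "n \<ge> 2"
  shows "step_exp n w (coord_sum n) = coord_sum n w + (if num_zeros n w = 0 then 0 else 1)"
proof -
  have "(\<Sum>l<n - 1. inc_prob n n w l * coord_sum n (inc w l))
      = (\<Sum>l<n - 1. inc_prob n n w l) * (coord_sum n w + 1)"
    by (simp add: coord_sum_inc sum_distrib_right)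
  then show ?thesis
    unfolding step_exp_def sum_inc_prob[OF assms]
    using assms by (auto simp: coord_sum_dec_all of_nat_diff field_simps)
qed

lemma first_hit_Suc:
  assumes "n \<ge> 1" and "w \<noteq> z"
  shows "first_hit (trans_prob n n) z (Suc t) w = step_exp n w (first_hit (trans_prob n n) z t)"
  using assms by (simp add: infsum_trans_prob)

lemma first_hit_nonneg:
  assumes "n \<ge> 1"
  shows "first_hit (trans_prob n n) z t w \<ge> 0"
proof (induction t arbitrary: w)
  case (Suc t)
  show ?case
  proof (cases "w = z")
    case False
    show ?thesis
      unfolding first_hit_Suc[OF assms False] by (rule step_exp_nonneg) (simp_all add: Suc.IH)
  qed simp
qed simp

fun hit_prob :: "nat \<Rightarrow> (nat \<Rightarrow> nat) \<Rightarrow> nat \<Rightarrow> (nat \<Rightarrow> nat) \<Rightarrow> real" where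
  "hit_prob n z 0 w = (if w = z then 1 else 0)"
| "hit_prob n z (Suc t) w = (if w = z then 1 else step_exp n w (hit_prob n z t))"

lemma hit_prob_self [simp]: "hit_prob n z t z = 1"
  by (cases t) simp_all

lemma hit_prob_eq_sum_first_hit:
  assumes "n \<ge> 1"
  shows "hit_prob n z t w = (\<Sum>s\<le>t. first_hit (trans_prob n n) z s w)"
proof (induction t arbitrary: w)
  case (Suc t)
  show ?case
  proof (cases "w = z")
    case False
    have "(\<Sum>s\<le>Suc t. first_hit (trans_prob n n) z s w)
        = (\<Sum>s\<le>t. step_exp n w (first_hit (trans_prob n n) z s))"
      unfolding sum.atMost_Suc_shift first_hit_Suc[OF assms False] using False by simp
    also have "\<dots> = step_exp n w (\<lambda>v. \<Sum>s\<le>t. first_hit (trans_prob n n) z s v)"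
      by (simp add: step_exp_sum)
    also have "(\<lambda>v. \<Sum>s\<le>t. first_hit (trans_prob n n) z s v) = hit_prob n z t"
      by (simp add: fun_eq_iff Suc.IH)
    finally show ?thesis
      using False by simp
  qed (simp add: Suc.IH[symmetric])
qed simp

lemma hit_prob_le_1:
  assumes "n \<ge> 2"
  shows "hit_prob n z t w \<le> 1"
proof (induction t arbitrary: w)
  case (Suc t)
  have "step_exp n w (\<lambda>v. 1 - hit_prob n z t v) \<ge> 0"
    by (rule step_exp_nonneg) (simp_all add: Suc.IH)
  then show ?case
    using assms by (simp add: step_exp_diff step_exp_const)
qed simp

text \<open>The expected coordinate sum at time \<open>t\<close>, for the chain stopped on hitting \<open>z\<close>.\<close>
fun stopped_sum :: "nat \<Rightarrow> (nat \<Rightarrow> nat) \<Rightarrow> nat \<Rightarrow> (nat \<Rightarrow> nat) \<Rightarrow> real" where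
  "stopped_sum n z 0 w = coord_sum n w"
| "stopped_sum n z (Suc t) w = (if w = z then coord_sum n z else step_exp n w (stopped_sum n z t))"

lemma stopped_sum_mono_Suc:
  assumes "n \<ge> 2"
  shows "stopped_sum n z t w \<le> stopped_sum n z (Suc t) w"
proof (induction t arbitrary: w)
  case 0
  have "stopped_sum n z 0 = coord_sum n"
    by (rule ext) simp
  then show ?case
    using step_exp_coord_sum[OF assms, of w] by simp
next
  case (Suc t)
  then show ?case
    by (auto intro: step_exp_mono)
qed

lemma step_exp_stopped_sum_upper:
  assumes "n \<ge> 2"
    and "\<And>v. stopped_sum n z t v
              \<le> coord_sum n z * hit_prob n z t v + (coord_sum n v + real t) * (1 - hit_prob n z t v)"
  shows "step_exp n w (stopped_sum n z t)
           \<le> coord_sum n z * step_exp n w (hit_prob n z t)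
             + (coord_sum n w + 1 + real t) * (1 - step_exp n w (hit_prob n z t))"
proof -
  define B where
    "B v = coord_sum n z * hit_prob n z t v + (coord_sum n w + 1 + real t) * (1 - hit_prob n z t v)" for v
  have bound: "stopped_sum n z t v \<le> B v" if "coord_sum n v \<le> coord_sum n w + 1" for v
  proof -
    have "(coord_sum n v + real t) * (1 - hit_prob n z t v)
        \<le> (coord_sum n w + 1 + real t) * (1 - hit_prob n z t v)"
      using that hit_prob_le_1[OF assms(1)] by (intro mult_right_mono) auto
    then show ?thesis
      using assms(2)[of v] unfolding B_def by linarith
  qed
  have "step_exp n w (stopped_sum n z t) \<le> step_exp n w B"
  proof (rule step_exp_mono)
    show "stopped_sum n z t (dec_all n w) \<le> B (dec_all n w)"
      using coord_sum_dec_all_le[of n w] by (intro bound) linarith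
    show "stopped_sum n z t (inc w l) \<le> B (inc w l)" if "l < n - 1" for l
      using coord_sum_inc[OF that, of w] by (intro bound) linarith
  qed
  also have "step_exp n w B
      = coord_sum n z * step_exp n w (hit_prob n z t)
        + (coord_sum n w + 1 + real t) * (1 - step_exp n w (hit_prob n z t))"
    unfolding B_def by (simp only: step_exp_add step_exp_cmult step_exp_diff step_exp_const[OF assms(1)])
  finally show ?thesis .
qed

lemma stopped_sum_upper:
  assumes "n \<ge> 2"
  shows "stopped_sum n z t w
           \<le> coord_sum n z * hit_prob n z t w + (coord_sum n w + real t) * (1 - hit_prob n z t w)"
proof (induction t arbitrary: w)
  case (Suc t)
  show ?case
    using step_exp_stopped_sum_upper[OF assms Suc.IH, of w] by (simp add: algebra_simps)
qed simp

definition min_coord :: "nat \<Rightarrow> (nat \<Rightarrow> nat) \<Rightarrow> nat" where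
  "min_coord n w = Min (w ` {..<n - 1})"

lemma min_coord_pos_iff:
  assumes "n \<ge> 2"
  shows "min_coord n w > 0 \<longleftrightarrow> num_zeros n w = 0"
proof -
  have "w ` {..<n - 1} \<noteq> {}"
    using assms by (simp add: lessThan_empty_iff)
  then show ?thesis
    by (auto simp: min_coord_def num_zeros_eq_0_iff Min_gr_iff)
qed

lemma min_coord_dec_all:
  assumes "n \<ge> 2"
  shows "min_coord n (dec_all n w) = min_coord n w - 1"
proof -
  have "w ` {..<n - 1} \<noteq> {}"
    using assms by (simp add: lessThan_empty_iff)
  then have "Min (w ` {..<n - 1}) - 1 = Min ((\<lambda>x. x - 1) ` w ` {..<n - 1})"
    by (intro mono_Min_commute) (auto simp: mono_def)
  also have "(\<lambda>x. x - 1) ` w ` {..<n - 1} = dec_all n w ` {..<n - 1}"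
    by (auto simp: dec_all_def)
  finally show ?thesis
    unfolding min_coord_def ..
qed

lemma step_exp_stopped_sum_diff_ge:
  assumes "n \<ge> 2" and "num_zeros n w = 0"
  shows "step_exp n w (stopped_sum n z (Suc t)) - step_exp n w (stopped_sum n z t)
           \<ge> (stopped_sum n z (Suc t) (dec_all n w) - stopped_sum n z t (dec_all n w)) / real n"
proof -
  have "step_exp n w (\<lambda>v. stopped_sum n z (Suc t) v - stopped_sum n z t v)
      \<ge> (stopped_sum n z (Suc t) (dec_all n w) - stopped_sum n z t (dec_all n w)) / real n"
    by (rule step_exp_ge_dec[OF assms(2)])
      (use stopped_sum_mono_Suc[OF assms(1)] in \<open>simp only: diff_ge_0_iff_ge\<close>)
  then show ?thesis
    by (simp only: step_exp_diff)
qed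

text \<open>Descending from \<open>w\<close> along \<open>dec_all\<close> reaches a state with a zero coordinate, where the
  coordinate sum has drift \<open>1\<close>; none of the states on the way is \<open>z\<close>, their coordinate
  sums being smaller.\<close>
lemma stopped_sum_increment:
  assumes "n \<ge> 2" and "coord_sum n w < coord_sum n z" and "min_coord n w = j"
  shows "stopped_sum n z j w + (1 / real n) ^ j \<le> stopped_sum n z (Suc j) w"
  using assms(2,3)
proof (induction j arbitrary: w)
  case 0
  then have "w \<noteq> z" and "num_zeros n w \<noteq> 0"
    using min_coord_pos_iff[OF assms(1), of w] by auto
  moreover have "stopped_sum n z 0 = coord_sum n"
    by (rule ext) simp
  ultimately show ?case
    using step_exp_coord_sum[OF assms(1), of w] by simp
next
  case (Suc j)
  then have "w \<noteq> z" and zeros: "num_zeros n w = 0"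
    using min_coord_pos_iff[OF assms(1), of w] by auto
  have "coord_sum n (dec_all n w) < coord_sum n z"
    using coord_sum_dec_all[OF zeros] Suc.prems(1) assms(1) by simp
  moreover have "min_coord n (dec_all n w) = j"
    using min_coord_dec_all[OF assms(1)] Suc.prems(2) by simp
  ultimately have "stopped_sum n z j (dec_all n w) + (1 / real n) ^ j
      \<le> stopped_sum n z (Suc j) (dec_all n w)"
    by (rule Suc.IH)
  then have "(1 / real n) ^ Suc j
      \<le> (stopped_sum n z (Suc j) (dec_all n w) - stopped_sum n z j (dec_all n w)) / real n"
    by (simp add: divide_right_mono)
  also have "\<dots> \<le> stopped_sum n z (Suc (Suc j)) w - stopped_sum n z (Suc j) w"
    using step_exp_stopped_sum_diff_ge[OF assms(1) zeros, of z j] \<open>w \<noteq> z\<close>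
    by (simp only: stopped_sum.simps(2) if_False)
  finally show ?case
    by simp
qed

lemma step_exp_stopped_sum_eventually_gt:
  assumes "n \<ge> 2"
  shows "\<exists>c>0. \<forall>\<^sub>F T in sequentially. coord_sum n z + c \<le> step_exp n z (stopped_sum n z T)"
proof -
  define G where "G T = step_exp n z (stopped_sum n z T)" for T
  have "incseq G"
    unfolding G_def by (intro incseq_SucI step_exp_mono stopped_sum_mono_Suc[OF assms])
  have "stopped_sum n z 0 = coord_sum n"
    by (rule ext) simp
  then have G0: "G 0 = coord_sum n z + (if num_zeros n z = 0 then 0 else 1)"
    unfolding G_def by (simp add: step_exp_coord_sum[OF assms])
  obtain c T0 where "c > 0" and c: "coord_sum n z + c \<le> G T0"
  proof (cases "num_zeros n z = 0")
    case False
    then show ?thesis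
      using G0 that[of 1 0] by simp
  next
    case True
    define j where "j = min_coord n z - 1"
    have "min_coord n z > 0"
      using True min_coord_pos_iff[OF assms] by simp
    have "coord_sum n (dec_all n z) < coord_sum n z"
      using coord_sum_dec_all[OF True] assms by simp
    moreover have "min_coord n (dec_all n z) = j"
      using \<open>min_coord n z > 0\<close> unfolding j_def by (simp add: min_coord_dec_all[OF assms])
    ultimately have "stopped_sum n z j (dec_all n z) + (1 / real n) ^ j
        \<le> stopped_sum n z (Suc j) (dec_all n z)"
      by (rule stopped_sum_increment[OF assms])
    then have "(1 / real n) ^ j / real n
        \<le> (stopped_sum n z (Suc j) (dec_all n z) - stopped_sum n z j (dec_all n z)) / real n"
      by (simp add: divide_right_mono)
    also have "\<dots> \<le> G (Suc j) - G j"
      unfolding G_def by (rule step_exp_stopped_sum_diff_ge[OF assms True])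
    finally have "coord_sum n z + (1 / real n) ^ j / real n \<le> G (Suc j)"
      using G0 True incseqD[OF \<open>incseq G\<close>, of 0 j] by simp
    moreover have "(1 / real n) ^ j / real n > 0"
      using assms by simp
    ultimately show ?thesis
      using that by blast
  qed
  then have "\<forall>\<^sub>F T in sequentially. coord_sum n z + c \<le> G T"
    using incseqD[OF \<open>incseq G\<close>] unfolding eventually_sequentially by (meson order_trans)
  then show ?thesis
    using \<open>c > 0\<close> unfolding G_def by blast
qed

lemma suminf_tail_tendsto_0:
  fixes f :: "nat \<Rightarrow> real"
  assumes "summable f"
  shows "(\<lambda>N. \<Sum>i. f (i + N)) \<longlonglongrightarrow> 0"
proof -
  have "(\<Sum>i. f (i + N)) = suminf f - (\<Sum>i<N. f i)" for N
    using suminf_split_initial_segment[OF assms, of N] by linarith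
  moreover have "(\<lambda>N. suminf f - (\<Sum>i<N. f i)) \<longlonglongrightarrow> suminf f - suminf f"
    by (intro tendsto_diff tendsto_const summable_LIMSEQ assms)
  ultimately show ?thesis
    by simp
qed

lemma summable_if_summable_index_times:
  fixes r :: "nat \<Rightarrow> real"
  assumes "\<And>t. r t \<ge> 0" and "summable (\<lambda>t. real t * r t)"
  shows "summable r"
proof (rule summable_comparison_test'[OF assms(2)])
  show "norm (r t) \<le> real t * r t" if "t \<ge> 1" for t
    using mult_right_mono[OF _ assms(1)[of t], of 1 "real t"] that assms(1)[of t] by simp
qed

lemma index_times_suminf_tail_tendsto_0:
  fixes r :: "nat \<Rightarrow> real"
  assumes nonneg: "\<And>t. r t \<ge> 0" and mean: "summable (\<lambda>t. real t * r t)"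
  shows "(\<lambda>N. real N * (\<Sum>i. r (i + N))) \<longlonglongrightarrow> 0"
proof (rule tendsto_sandwich)
  have tail: "summable (\<lambda>i. r (i + N))" for N
    by (rule summable_ignore_initial_segment[OF summable_if_summable_index_times[OF nonneg mean]])
  have "real N * (\<Sum>i. r (i + N)) \<le> (\<Sum>i. real (i + N) * r (i + N))" for N
    unfolding suminf_mult[OF tail, symmetric]
    by (intro suminf_le summable_mult tail summable_ignore_initial_segment[OF mean] mult_right_mono nonneg)
      simp
  then show "\<forall>\<^sub>F N in sequentially. real N * (\<Sum>i. r (i + N)) \<le> (\<Sum>i. real (i + N) * r (i + N))"
    by simp
  show "\<forall>\<^sub>F N in sequentially. 0 \<le> real N * (\<Sum>i. r (i + N))"
    using tail nonneg by (simp add: suminf_nonneg)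
  show "(\<lambda>N. \<Sum>i. real (i + N) * r (i + N)) \<longlonglongrightarrow> 0"
    using suminf_tail_tendsto_0[OF mean] by simp
qed simp

lemma step_exp_stopped_sum_le_no_return:
  assumes "n \<ge> 2"
  shows "step_exp n z (stopped_sum n z T)
           \<le> coord_sum n z
             + (coord_sum n z + 1) * (real (Suc (Suc T)) * (1 - step_exp n z (hit_prob n z T)))"
proof -
  define S where "S = coord_sum n z"
  define H where "H = step_exp n z (hit_prob n z T)"
  have "H \<le> 1"
    unfolding H_def using step_exp_mono[of n z "hit_prob n z T" "\<lambda>_. 1"]
    by (simp add: hit_prob_le_1[OF assms] step_exp_const[OF assms])
  have "S \<ge> 0"
    unfolding S_def by (rule coord_sum_nonneg)
  have "step_exp n z (stopped_sum n z T) \<le> S * H + (S + 1 + real T) * (1 - H)"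
    unfolding S_def H_def by (rule step_exp_stopped_sum_upper[OF assms stopped_sum_upper[OF assms]])
  also have "S * H \<le> S"
    using \<open>H \<le> 1\<close> \<open>S \<ge> 0\<close> by (simp add: mult_left_le)
  also have "(S + 1 + real T) * (1 - H) \<le> ((S + 1) * real (Suc (Suc T))) * (1 - H)"
    using \<open>H \<le> 1\<close> \<open>S \<ge> 0\<close> by (intro mult_right_mono) (simp_all add: algebra_simps)
  finally show ?thesis
    unfolding S_def H_def by (simp only: mult.assoc add_le_cancel_left)
qed

lemma return_prob_0: "return_prob P z 0 = 0"
  by (simp add: return_prob_def)

lemma return_prob_Suc:
  assumes "n \<ge> 1"
  shows "return_prob (trans_prob n n) z (Suc t) = step_exp n z (first_hit (trans_prob n n) z t)"
  using assms by (simp add: return_prob_def infsum_trans_prob)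

lemma return_prob_nonneg:
  assumes "n \<ge> 1"
  shows "return_prob (trans_prob n n) z t \<ge> 0"
proof (cases t)
  case (Suc s)
  show ?thesis
    unfolding Suc return_prob_Suc[OF assms]
    by (rule step_exp_nonneg) (simp_all add: first_hit_nonneg[OF assms])
qed (simp add: return_prob_0)

lemma sum_return_prob:
  assumes "n \<ge> 1"
  shows "(\<Sum>t<Suc (Suc T). return_prob (trans_prob n n) z t) = step_exp n z (hit_prob n z T)"
proof -
  have "(\<Sum>t<Suc (Suc T). return_prob (trans_prob n n) z t)
      = return_prob (trans_prob n n) z 0 + (\<Sum>s<Suc T. return_prob (trans_prob n n) z (Suc s))"
    by (rule sum.lessThan_Suc_shift)
  also have "\<dots> = (\<Sum>s\<le>T. step_exp n z (first_hit (trans_prob n n) z s))"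
    by (simp add: return_prob_0 return_prob_Suc[OF assms] lessThan_Suc_atMost)
  also have "\<dots> = step_exp n z (\<lambda>v. \<Sum>s\<le>T. first_hit (trans_prob n n) z s v)"
    by (simp add: step_exp_sum)
  also have "(\<lambda>v. \<Sum>s\<le>T. first_hit (trans_prob n n) z s v) = hit_prob n z T"
    by (simp add: fun_eq_iff hit_prob_eq_sum_first_hit[OF assms])
  finally show ?thesis .
qed

theorem not_positive_recurrent_trans_prob:
  assumes "n \<ge> 2"
  shows "\<not> positive_recurrent (trans_prob n n) z"
proof
  assume "positive_recurrent (trans_prob n n) z"
  define r where "r = return_prob (trans_prob n n) z"
  have total: "(\<Sum>t. r t) = 1" and mean: "summable (\<lambda>t. real t * r t)"
    using \<open>positive_recurrent (trans_prob n n) z\<close> unfolding positive_recurrent_def r_def by auto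
  have nonneg: "r t \<ge> 0" for t
    unfolding r_def using assms by (intro return_prob_nonneg) simp
  define tail where "tail N = (\<Sum>i. r (i + N))" for N
  have "1 - step_exp n z (hit_prob n z T) = tail (Suc (Suc T))" for T
    using suminf_split_initial_segment[OF summable_if_summable_index_times[OF nonneg mean], of "Suc (Suc T)"]
      total sum_return_prob[of n z T] assms
    unfolding tail_def r_def by linarith
  then have upper: "step_exp n z (stopped_sum n z T)
      \<le> coord_sum n z + (coord_sum n z + 1) * (real (Suc (Suc T)) * tail (Suc (Suc T)))" for T
    using step_exp_stopped_sum_le_no_return[OF assms, of z T] by simp
  obtain c where "c > 0"
    and lower: "\<forall>\<^sub>F T in sequentially. coord_sum n z + c \<le> step_exp n z (stopped_sum n z T)"
    using step_exp_stopped_sum_eventually_gt[OF assms] by blast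
  have "(\<lambda>N. real N * tail N) \<longlonglongrightarrow> 0"
    unfolding tail_def by (rule index_times_suminf_tail_tendsto_0[OF nonneg mean])
  then have "(\<lambda>T. (coord_sum n z + 1) * (real (Suc (Suc T)) * tail (Suc (Suc T)))) \<longlonglongrightarrow> 0"
    by (intro tendsto_mult_right_zero LIMSEQ_Suc)
  then have "\<forall>\<^sub>F T in sequentially. (coord_sum n z + 1) * (real (Suc (Suc T)) * tail (Suc (Suc T))) < c"
    using \<open>c > 0\<close> by (rule order_tendstoD)
  with lower have "\<forall>\<^sub>F T in sequentially. False"
    by eventually_elim (smt (verit) upper)
  then show False
    by simp
qed

theorem proposition7p5:
  fixes n :: nat
  assumes "n \<ge> 3"
  shows "\<forall>x\<in>states n. \<not> positive_recurrent (trans_prob n n) x"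
  using assms by (simp add: not_positive_recurrent_trans_prob)

end
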